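(* Let $P,PA$ be labelings, $pc$ a label, $c$ a command with $P;PA\vdash_{pc}c$, and $\rho_1\sim_P\rho_2$, $\mu_1\sim_{PA}\mu_2$. If $\langle c,\rho_1,\mu_1,\beta\rangle\xrightarrow[d]{o}{}_i\langle c_1,\rho_1',\mu_1',\beta_1\rangle$ and $\langle c,\rho_2,\mu_2,\beta\rangle\xrightarrow[d]{o}{}_i\langle c_2,\rho_2',\mu_2',\beta_2\rangle$ (same directive $d$ and same observation $o$) in the ideal semantics w.r.t. $P$, then $c_1=c_2$, $\beta_1=\beta_2$, $\rho_1'\sim_P\rho_2'$ and $\mu_1'\sim_{PA}\mu_2'$.
   Context: Language AWhile: scalar variables $X\in\mathcal V$, arrays $a\in\mathcal A$; $e::=n\mid X\mid\mathrm{op}_{\mathbb N}(e,\dots,e)\mid be\,?\,e_1:e_2$; $be::=\mathtt{true}\mid\mathtt{false}\mid\mathrm{cmp}(e,e)\mid\mathrm{op}_{\mathbb B}(be,\dots,be)$; $c::=\mathtt{skip}\mid X:=e\mid c_1;c_2\mid\mathtt{if}\ be\ \mathtt{then}\ c_1\ \mathtt{else}\ c_2\mid\mathtt{while}\ be\ \mathtt{do}\ c\mid X\leftarrow a[e]\mid a[e]\leftarrow e'$. Scalar state $\rho:\mathcal V\to\mathbb N$; array state $\mu$ with sizes $|a|_\mu$ and values $\mu(a)[i]$; $[\![\cdot]\!]_\rho$ pure evaluation. Labels: $\mathtt{true}$=public, $\mathtt{false}$=secret; $\ell_1\sqsubseteq\ell_2$ iff $\ell_2=\mathtt{true}\Rightarrow\ell_1=\mathtt{true}$;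 $\ell_1\sqcup\ell_2=\ell_1\wedge\ell_2$. $P:\mathcal V\to$ labels, $PA:\mathcal A\to$ labels; $P(e),P(be)$ public iff all variables occurring are public. $\rho_1\sim_P\rho_2$ iff they agree on all public scalar variables; $\mu_1\sim_{PA}\mu_2$ iff they agree on sizes and contents of all public arrays. IFC typing $P;PA\vdash_{pc}c$: $\mathtt{skip}$; $X:=e$ if $pc\sqcup P(e)\sqsubseteq P(X)$; $c_1;c_2$ if both typed under $pc$; $\mathtt{if}$ if both branches typed under $pc\sqcup P(be)$; $\mathtt{while}$ if body typed under $pc\sqcup P(be)$; $X\leftarrow a[i]$ if $pc\sqcup P(i)\sqcup PA(a)\sqsubseteq P(X)$; $a[i]\leftarrow e$ if $pc\sqcup P(i)\sqcup P(e)\sqsubseteq PA(a)$. Ideal semantics w.r.t. $P$: configurations $\langle c,\rho,\mu,\beta\rangle$, $\beta$ a boolean misspeculation flag; steps $\xrightarrow[d]{o}{}_i$ with optional observation $o\in\{\mathrm{branch}(v),\mathrm{read}(a,i),\mathrm{write}(a,i)\}$ and optional directive $d\in\{\mathit{step},\mathit{force},\mathrm{load}(a',j),\mathrm{store}(a',j)\}$. $X:=e\to\mathtt{skip}$ with $\rho[X\mapsto[\![e]\!]_\rho]$; $c_1;c_2\to c_1';c_2$ whenever $c_1\to c_1'$ (same labels and state change); $\mathtt{skip};c\to c$; $\mathtt{while}\ be\ \mathtt{do}\ c\to\mathtt{if}\ be\ \mathtt{then}\ (c;\mathtt{while}\ be\ \mathtt{do}\ c)\ \mathtt{else}\ \mathtt{skip}$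 (no obs/directive, flag kept). Conditional: let $v=(P(be)\vee\neg\beta)\wedge[\![be]\!]_\rho$; with $\mathit{step}$ go to branch $v$, flag kept; with $\mathit{force}$ go to branch $\neg v$, flag set to $\mathtt{true}$; obs $\mathrm{branch}(v)$. Read $X\leftarrow a[ie]$ with $\mathit{step}$: $i=0$ if $(P(ie)=\mathtt{false}\vee P(X)=\mathtt{true})\wedge\beta$, else $i=[\![ie]\!]_\rho$; requires $i<|a|_\mu$; $X:=\mu(a)[i]$; obs $\mathrm{read}(a,i)$. Read with $\mathrm{load}(a',j)$: requires $\beta=\mathtt{true}$, $P(ie)=\mathtt{true}$, $P(X)=\mathtt{false}$, $i=[\![ie]\!]_\rho\ge|a|_\mu$, $j<|a'|_\mu$; $X:=\mu(a')[j]$; obs $\mathrm{read}(a,i)$. Write $a[ie]\leftarrow ae$ with $\mathit{step}$: $i=0$ if $(P(ie)=\mathtt{false}\vee P(ae)=\mathtt{false})\wedge\beta$, else $[\![ie]\!]_\rho$; requires $i<|a|_\mu$; $\mu[a[i]\mapsto[\![ae]\!]_\rho]$; obs $\mathrm{write}(a,i)$. Write with $\mathrm{store}(a',j)$: requires $\beta=\mathtt{true}$, $P(ie)=P(ae)=\mathtt{true}$, $i=[\![ie]\!]_\rho\ge|a|_\mu$, $j<|a'|_\mu$; $\mu[a'[j]\mapsto[\![ae]\!]_\rho]$; obs $\mathrm{write}(a,i)$. *)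

theory Defs
  imports Main
begin

type_synonym vname = string
type_synonym aname = string
type_synonym label = bool   (* True = public, False = secret *)

datatype aexp = ANum nat | AId vname | AOp "nat list \<Rightarrow> nat" "aexp list"
  | ACTIf bexp aexp aexp
and bexp = BTrue | BFalse | BCmp "nat \<Rightarrow> nat \<Rightarrow> bool" aexp aexp
  | BOp "bool list \<Rightarrow> bool" "bexp list"

datatype com = Skip
  | Asgn vname aexp
  | Seq com com
  | If bexp com com
  | While bexp com
  | ARead vname aname aexp
  | AWrite aname aexp aexp

type_synonym state = "vname \<Rightarrow> nat"
type_synonym mem = "aname \<Rightarrow> nat list"

primrec aeval :: "state \<Rightarrow> aexp \<Rightarrow> nat" and beval :: "state \<Rightarrow> bexp \<Rightarrow> bool" where
  "aeval \<rho> (ANum n) = n"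
| "aeval \<rho> (AId X) = \<rho> X"
| "aeval \<rho> (AOp f es) = f (map (aeval \<rho>) es)"
| "aeval \<rho> (ACTIf b e1 e2) = (if beval \<rho> b then aeval \<rho> e1 else aeval \<rho> e2)"
| "beval \<rho> BTrue = True"
| "beval \<rho> BFalse = False"
| "beval \<rho> (BCmp f e1 e2) = f (aeval \<rho> e1) (aeval \<rho> e2)"
| "beval \<rho> (BOp f bs) = f (map (beval \<rho>) bs)"

primrec avars :: "aexp \<Rightarrow> vname set" and bvars :: "bexp \<Rightarrow> vname set" where
  "avars (ANum n) = {}"
| "avars (AId X) = {X}"
| "avars (AOp f es) = \<Union> (set (map avars es))"
| "avars (ACTIf b e1 e2) = bvars b \<union> avars e1 \<union> avars e2"
| "bvars BTrue = {}"
| "bvars BFalse = {}"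
| "bvars (BCmp f e1 e2) = avars e1 \<union> avars e2"
| "bvars (BOp f bs) = \<Union> (set (map bvars bs))"

definition can_flow :: "label \<Rightarrow> label \<Rightarrow> bool" where
  "can_flow l1 l2 \<longleftrightarrow> (l2 = True \<longrightarrow> l1 = True)"

definition join :: "label \<Rightarrow> label \<Rightarrow> label" where
  "join l1 l2 = (l1 \<and> l2)"

definition label_of_aexp :: "(vname \<Rightarrow> label) \<Rightarrow> aexp \<Rightarrow> label" where
  "label_of_aexp P e \<longleftrightarrow> (\<forall>X\<in>avars e. P X)"

definition label_of_bexp :: "(vname \<Rightarrow> label) \<Rightarrow> bexp \<Rightarrow> label" where
  "label_of_bexp P b \<longleftrightarrow> (\<forall>X\<in>bvars b. P X)"

definition pub_equiv :: "(vname \<Rightarrow> label) \<Rightarrow> state \<Rightarrow> state \<Rightarrow> bool" where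
  "pub_equiv P \<rho>1 \<rho>2 \<longleftrightarrow> (\<forall>X. P X \<longrightarrow> \<rho>1 X = \<rho>2 X)"

definition pub_equiv_mem :: "(aname \<Rightarrow> label) \<Rightarrow> mem \<Rightarrow> mem \<Rightarrow> bool" where
  "pub_equiv_mem PA \<mu>1 \<mu>2 \<longleftrightarrow>
     (\<forall>a. PA a \<longrightarrow> length (\<mu>1 a) = length (\<mu>2 a) \<and> (\<forall>i < length (\<mu>1 a). \<mu>1 a ! i = \<mu>2 a ! i))"

inductive well_typed :: "(vname \<Rightarrow> label) \<Rightarrow> (aname \<Rightarrow> label) \<Rightarrow> label \<Rightarrow> com \<Rightarrow> bool" where
  WT_Skip: "well_typed P PA pc Skip"
| WT_Asgn: "can_flow (join pc (label_of_aexp P e)) (P X) \<Longrightarrow> well_typed P PA pc (Asgn X e)"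
| WT_Seq: "well_typed P PA pc c1 \<Longrightarrow> well_typed P PA pc c2 \<Longrightarrow> well_typed P PA pc (Seq c1 c2)"
| WT_If: "well_typed P PA (join pc (label_of_bexp P b)) c1 \<Longrightarrow>
          well_typed P PA (join pc (label_of_bexp P b)) c2 \<Longrightarrow> well_typed P PA pc (If b c1 c2)"
| WT_While: "well_typed P PA (join pc (label_of_bexp P b)) c \<Longrightarrow> well_typed P PA pc (While b c)"
| WT_ARead: "can_flow (join (join pc (label_of_aexp P i)) (PA a)) (P X) \<Longrightarrow>
             well_typed P PA pc (ARead X a i)"
| WT_AWrite: "can_flow (join (join pc (label_of_aexp P i)) (label_of_aexp P e)) (PA a) \<Longrightarrow>
              well_typed P PA pc (AWrite a i e)"

datatype observation = OBranch bool | ORead aname nat | OWrite aname nat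
datatype directive = DStep | DForce | DLoad aname nat | DStore aname nat

type_synonym config = "com \<times> state \<times> mem \<times> bool"

inductive ideal_step :: "(vname \<Rightarrow> label) \<Rightarrow> config \<Rightarrow> directive option \<Rightarrow> observation option
                          \<Rightarrow> config \<Rightarrow> bool" where
  Ideal_Asgn: "ideal_step P (Asgn X e, \<rho>, \<mu>, b) None None (Skip, \<rho>(X := aeval \<rho> e), \<mu>, b)"
| Ideal_Seq: "ideal_step P (c1, \<rho>, \<mu>, b) d ob (c1', \<rho>', \<mu>', b') \<Longrightarrow>
              ideal_step P (Seq c1 c2, \<rho>, \<mu>, b) d ob (Seq c1' c2, \<rho>', \<mu>', b')"
| Ideal_Seq_Skip: "ideal_step P (Seq Skip c, \<rho>, \<mu>, b) None None (c, \<rho>, \<mu>, b)"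
| Ideal_While: "ideal_step P (While be c, \<rho>, \<mu>, b) None None
                  (If be (Seq c (While be c)) Skip, \<rho>, \<mu>, b)"
| Ideal_If: "v = ((label_of_bexp P be \<or> \<not> b) \<and> beval \<rho> be) \<Longrightarrow>
             ideal_step P (If be c1 c2, \<rho>, \<mu>, b) (Some DStep) (Some (OBranch v))
               (if v then c1 else c2, \<rho>, \<mu>, b)"
| Ideal_If_F: "v = ((label_of_bexp P be \<or> \<not> b) \<and> beval \<rho> be) \<Longrightarrow>
             ideal_step P (If be c1 c2, \<rho>, \<mu>, b) (Some DForce) (Some (OBranch v))
               (if v then c2 else c1, \<rho>, \<mu>, True)"
| Ideal_ARead: "i = (if (\<not> label_of_aexp P ie \<or> P X) \<and> b then 0 else aeval \<rho> ie) \<Longrightarrow>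
                i < length (\<mu> a) \<Longrightarrow>
                ideal_step P (ARead X a ie, \<rho>, \<mu>, b) (Some DStep) (Some (ORead a i))
                  (Skip, \<rho>(X := \<mu> a ! i), \<mu>, b)"
| Ideal_ARead_U: "b = True \<Longrightarrow> label_of_aexp P ie \<Longrightarrow> \<not> P X \<Longrightarrow>
                i = aeval \<rho> ie \<Longrightarrow> i \<ge> length (\<mu> a) \<Longrightarrow> j < length (\<mu> a') \<Longrightarrow>
                ideal_step P (ARead X a ie, \<rho>, \<mu>, b) (Some (DLoad a' j)) (Some (ORead a i))
                  (Skip, \<rho>(X := \<mu> a' ! j), \<mu>, b)"
| Ideal_AWrite: "i = (if (\<not> label_of_aexp P ie \<or> \<not> label_of_aexp P ae) \<and> b then 0 else aeval \<rho> ie) \<Longrightarrow>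
                i < length (\<mu> a) \<Longrightarrow>
                ideal_step P (AWrite a ie ae, \<rho>, \<mu>, b) (Some DStep) (Some (OWrite a i))
                  (Skip, \<rho>, \<mu>(a := (\<mu> a)[i := aeval \<rho> ae]), b)"
| Ideal_AWrite_U: "b = True \<Longrightarrow> label_of_aexp P ie \<Longrightarrow> label_of_aexp P ae \<Longrightarrow>
                i = aeval \<rho> ie \<Longrightarrow> i \<ge> length (\<mu> a) \<Longrightarrow> j < length (\<mu> a') \<Longrightarrow>
                ideal_step P (AWrite a ie ae, \<rho>, \<mu>, b) (Some (DStore a' j)) (Some (OWrite a i))
                  (Skip, \<rho>, \<mu>(a' := (\<mu> a')[j := aeval \<rho> ae]), b)"

end

theory Submission
  imports Defs
begin

(* The two runs are forced to agree on everything that decides their control: the directive is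
   shared, the observation fixes the branch taken and the array index accessed, and the flag
   only changes under the shared directive DForce. What remains are the values written, and
   the typing rules only let a public variable or array receive a value computed from public
   variables and public arrays, on which the two runs agree. *)

lemma aeval_eq_if_pub_equiv:
  "(\<forall>X\<in>avars e. P X) \<Longrightarrow> pub_equiv P \<rho>1 \<rho>2 \<Longrightarrow> aeval \<rho>1 e = aeval \<rho>2 e"
and beval_eq_if_pub_equiv:
  "(\<forall>X\<in>bvars b. P X) \<Longrightarrow> pub_equiv P \<rho>1 \<rho>2 \<Longrightarrow> beval \<rho>1 b = beval \<rho>2 b"
proof (induction e and b)
  case (AOp f es)
  then have "map (aeval \<rho>1) es = map (aeval \<rho>2) es" by (auto intro!: map_cong)
  then show ?case by (simp only: aeval.simps)
next
  case (BOp f bs)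
  then have "map (beval \<rho>1) bs = map (beval \<rho>2) bs" by (auto intro!: map_cong)
  then show ?case by (simp only: beval.simps)
qed (auto simp: pub_equiv_def)

lemma aeval_eq_if_public:
  "label_of_aexp P e \<Longrightarrow> pub_equiv P \<rho>1 \<rho>2 \<Longrightarrow> aeval \<rho>1 e = aeval \<rho>2 e"
  unfolding label_of_aexp_def by (rule aeval_eq_if_pub_equiv)

lemma pub_equiv_update:
  "pub_equiv P \<rho>1 \<rho>2 \<Longrightarrow> (P X \<Longrightarrow> v1 = v2) \<Longrightarrow> pub_equiv P (\<rho>1(X := v1)) (\<rho>2(X := v2))"
  by (simp add: pub_equiv_def)

lemma pub_equiv_mem_nth:
  "pub_equiv_mem PA \<mu>1 \<mu>2 \<Longrightarrow> PA a \<Longrightarrow> i < length (\<mu>1 a) \<Longrightarrow> \<mu>1 a ! i = \<mu>2 a ! i"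
  by (simp add: pub_equiv_mem_def)

lemma pub_equiv_mem_list_update:
  assumes "pub_equiv_mem PA \<mu>1 \<mu>2" and "PA a \<Longrightarrow> v1 = v2"
  shows "pub_equiv_mem PA (\<mu>1(a := (\<mu>1 a)[i := v1])) (\<mu>2(a := (\<mu>2 a)[i := v2]))"
proof -
  have "(\<mu>1 a)[i := v1] ! k = (\<mu>2 a)[i := v2] ! k" if "PA a" and "k < length (\<mu>1 a)" for k
    using assms that by (cases "k = i") (auto simp: pub_equiv_mem_def nth_list_update)
  then show ?thesis
    using assms(1) by (auto simp: pub_equiv_mem_def)
qed

inductive_cases Skip_stepE[elim!]: "ideal_step P (Skip, \<rho>, \<mu>, b) d ob cf"
inductive_cases Asgn_stepE[elim!]: "ideal_step P (Asgn X e, \<rho>, \<mu>, b) d ob cf"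
inductive_cases Seq_stepE: "ideal_step P (Seq c c', \<rho>, \<mu>, b) d ob cf"
inductive_cases If_stepE[elim!]: "ideal_step P (If be c c', \<rho>, \<mu>, b) d ob cf"
inductive_cases While_stepE[elim!]: "ideal_step P (While be c, \<rho>, \<mu>, b) d ob cf"
inductive_cases ARead_stepE[elim!]: "ideal_step P (ARead X a ie, \<rho>, \<mu>, b) d ob cf"
inductive_cases AWrite_stepE[elim!]: "ideal_step P (AWrite a ie ae, \<rho>, \<mu>, b) d ob cf"

inductive_cases Asgn_typedE[elim!]: "well_typed P PA pc (Asgn X e)"
inductive_cases Seq_typedE[elim!]: "well_typed P PA pc (Seq c c')"
inductive_cases ARead_typedE[elim!]: "well_typed P PA pc (ARead X a ie)"
inductive_cases AWrite_typedE[elim!]: "well_typed P PA pc (AWrite a ie ae)"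

lemma ARead_step_pub_equiv:
  assumes "well_typed P PA pc (ARead X a ie)"
    and "pub_equiv P \<rho>1 \<rho>2" and "pub_equiv_mem PA \<mu>1 \<mu>2"
    and "ideal_step P (ARead X a ie, \<rho>1, \<mu>1, \<beta>) d ob (c1, \<rho>1', \<mu>1', \<beta>1)"
    and "ideal_step P (ARead X a ie, \<rho>2, \<mu>2, \<beta>) d ob (c2, \<rho>2', \<mu>2', \<beta>2)"
  shows "c1 = c2 \<and> \<beta>1 = \<beta>2 \<and> pub_equiv P \<rho>1' \<rho>2' \<and> pub_equiv_mem PA \<mu>1' \<mu>2'"
proof -
  from assms(1) have "P X \<Longrightarrow> PA a" by (auto simp: can_flow_def join_def)
  with assms(2-5) show ?thesis
    by (auto intro!: pub_equiv_update elim: pub_equiv_mem_nth)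
qed

lemma AWrite_step_pub_equiv:
  assumes "well_typed P PA pc (AWrite a ie ae)"
    and "pub_equiv P \<rho>1 \<rho>2" and "pub_equiv_mem PA \<mu>1 \<mu>2"
    and "ideal_step P (AWrite a ie ae, \<rho>1, \<mu>1, \<beta>) d ob (c1, \<rho>1', \<mu>1', \<beta>1)"
    and "ideal_step P (AWrite a ie ae, \<rho>2, \<mu>2, \<beta>) d ob (c2, \<rho>2', \<mu>2', \<beta>2)"
  shows "c1 = c2 \<and> \<beta>1 = \<beta>2 \<and> pub_equiv P \<rho>1' \<rho>2' \<and> pub_equiv_mem PA \<mu>1' \<mu>2'"
proof -
  from assms(1) have "PA a \<Longrightarrow> label_of_aexp P ae" by (auto simp: can_flow_def join_def)
  with assms(2-5) show ?thesis
    by (auto intro!: pub_equiv_mem_list_update aeval_eq_if_public)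
qed

theorem lemma5p2:
  fixes P :: "vname \<Rightarrow> label" and PA :: "aname \<Rightarrow> label" and pc :: label and c :: com
  assumes "well_typed P PA pc c"
    and "pub_equiv P \<rho>1 \<rho>2"
    and "pub_equiv_mem PA \<mu>1 \<mu>2"
    and "ideal_step P (c, \<rho>1, \<mu>1, \<beta>) d ob (c1, \<rho>1', \<mu>1', \<beta>1)"
    and "ideal_step P (c, \<rho>2, \<mu>2, \<beta>) d ob (c2, \<rho>2', \<mu>2', \<beta>2)"
  shows "c1 = c2 \<and> \<beta>1 = \<beta>2 \<and> pub_equiv P \<rho>1' \<rho>2' \<and> pub_equiv_mem PA \<mu>1' \<mu>2'"
  using assms
proof (induction c arbitrary: c1 c2 \<rho>1' \<rho>2' \<mu>1' \<mu>2' \<beta>1 \<beta>2 d ob rule: com.induct)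
  case (Asgn X e)
  then have "P X \<Longrightarrow> label_of_aexp P e" by (auto simp: can_flow_def join_def)
  with Asgn show ?case by (auto intro!: pub_equiv_update aeval_eq_if_public)
next
  case (Seq c c')
  show ?case
  proof (cases "c = Skip")
    case True
    with Seq.prems(2-5) show ?thesis by (auto elim!: Seq_stepE)
  next
    case False
    with Seq.prems(4) obtain c1'' where "c1 = Seq c1'' c'"
      and "ideal_step P (c, \<rho>1, \<mu>1, \<beta>) d ob (c1'', \<rho>1', \<mu>1', \<beta>1)"
      by (auto elim: Seq_stepE)
    moreover from False Seq.prems(5) obtain c2'' where "c2 = Seq c2'' c'"
      and "ideal_step P (c, \<rho>2, \<mu>2, \<beta>) d ob (c2'', \<rho>2', \<mu>2', \<beta>2)"
      by (auto elim: Seq_stepE)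
    ultimately show ?thesis
      using Seq.IH(1) Seq.prems(1-3) by blast
  qed
next
  case ARead
  then show ?case by (rule ARead_step_pub_equiv)
next
  case AWrite
  then show ?case by (rule AWrite_step_pub_equiv)
qed auto

end
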